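(* Let $X$ be a Polish space, $f:X\to\mathbb R$ a Baire-1 function and $a<b$ reals. Then $$\alpha(f,a,b)=\sup\{\alpha(f,K,a,b):K\subseteq X\text{ compact}\}.$$
   Context: Separation rank: for $f:X\to\mathbb R$, reals $a<b$ and closed $F\subseteq X$, let $F'_{f,a,b}=\overline{F\cap[f<a]}\cap\overline{F\cap[f>b]}$, where $[f<a]=\{x:f(x)<a\}$, $[f>b]=\{x:f(x)>b\}$. Define iterated derivatives $F^{(0)}_{f,a,b}=F$, $F^{(\xi+1)}_{f,a,b}=(F^{(\xi)}_{f,a,b})'_{f,a,b}$ and $F^{(\lambda)}_{f,a,b}=\bigcap_{\xi<\lambda}F^{(\xi)}_{f,a,b}$ for limit $\lambda$. $\alpha(f,F,a,b)$ is the least ordinal $\xi$ with $F^{(\xi)}_{f,a,b}=\varnothing$ if such $\xi<\omega_1$ exists, and $\omega_1$ otherwise; $\alpha(f,a,b)=\alpha(f,X,a,b)$. *)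

theory Defs
  imports "HOL-Analysis.Analysis"
begin

definition baire1 :: "('a::topological_space \<Rightarrow> real) \<Rightarrow> bool" where
  "baire1 f \<longleftrightarrow> (\<exists>g :: nat \<Rightarrow> 'a \<Rightarrow> real.
      (\<forall>n. continuous_on UNIV (g n)) \<and> (\<forall>x. (\<lambda>n. g n x) \<longlonglongrightarrow> f x))"

definition sep_deriv :: "('a::topological_space \<Rightarrow> real) \<Rightarrow> real \<Rightarrow> real \<Rightarrow> 'a set \<Rightarrow> 'a set" where
  "sep_deriv f a b F = closure (F \<inter> {x. f x < a}) \<inter> closure (F \<inter> {x. f x > b})"

text \<open>Transfinite iteration F^(i), indexed by elements i of a well-ordered type; the
  ordinal represented by i is the order type of the initial segment below i.\<close>
definition sep_iter :: "('a::topological_space \<Rightarrow> real) \<Rightarrow> real \<Rightarrow> real \<Rightarrow> 'a set \<Rightarrow> 'i::wellorder \<Rightarrow> 'a set" where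
  "sep_iter f a b F = wfrec {(j, i). j < i} (\<lambda>D i.
     if \<not> (\<exists>j. j < i) then F
     else if (\<exists>j. j < i \<and> \<not> (\<exists>k. j < k \<and> k < i))
       then sep_deriv f a b (D (THE j. j < i \<and> \<not> (\<exists>k. j < k \<and> k < i)))
     else \<Inter> {D j | j. j < i})"

end

theory Submission
  imports Defs
begin

text \<open>By transfinite induction on \<open>i\<close> one shows more: every point \<open>x\<close> of the \<open>i\<close>-th derivative
  of the whole space has, inside any neighbourhood \<open>U\<close>, a compact \<open>K\<close> with \<open>x\<close> in the \<open>i\<close>-th
  derivative of \<open>K\<close>. At a successor step \<open>x\<close> is a limit of points \<open>y\<^sub>n\<close> with \<open>f y\<^sub>n < a\<close>
  (resp. \<open>> b\<close>) from the previous derivative; by induction each \<open>y\<^sub>n\<close> is witnessed by a compact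
  set in the ball of radius \<open>1/(n+1)\<close> around \<open>x\<close>, and \<open>x\<close> together with all these sets is
  compact. At a limit step the same construction handles the countably many earlier levels.
  Monotonicity of the derivative in \<open>F\<close> gives the converse.\<close>

lemma the_immediate_predecessor:
  assumes "p < (i::'i::wellorder)" "\<not> (\<exists>k. p < k \<and> k < i)"
  shows "(THE j. j < i \<and> \<not> (\<exists>k. j < k \<and> k < i)) = p"
  using assms by (intro the_equality) (auto, metis neqE)

lemma wellorder_zero_succ_limit_cases:
  fixes i :: "'i::wellorder"
  obtains (zero) "\<not> (\<exists>j. j < i)"
    | (succ) p where "p < i" "\<not> (\<exists>k. p < k \<and> k < i)"
    | (limit) "\<exists>j. j < i" "\<not> (\<exists>j. j < i \<and> \<not> (\<exists>k. j < k \<and> k < i))"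
  by blast

lemma sep_iter_unfold:
  "sep_iter f a b F (i::'i::wellorder) =
     (if \<not> (\<exists>j. j < i) then F
     else if (\<exists>j. j < i \<and> \<not> (\<exists>k. j < k \<and> k < i))
       then sep_deriv f a b (sep_iter f a b F (THE j. j < i \<and> \<not> (\<exists>k. j < k \<and> k < i)))
     else \<Inter> {sep_iter f a b F j | j. j < i})"
proof -
  have "(THE j. j < i \<and> \<not> (\<exists>k. j < k \<and> k < i)) < i"
    if "\<exists>j. j < i \<and> \<not> (\<exists>k. j < k \<and> k < i)"
  proof -
    from that obtain p where p: "p < i" "\<not> (\<exists>k. p < k \<and> k < i)" by blast
    show ?thesis by (subst the_immediate_predecessor[OF p]) (rule p(1))
  qed
  then show ?thesis
    unfolding sep_iter_def by (subst wfrec[OF wf]) (auto simp: cut_def)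
qed

lemma sep_iter_zero: "\<not> (\<exists>j. j < (i::'i::wellorder)) \<Longrightarrow> sep_iter f a b F i = F"
  by (subst sep_iter_unfold) simp

lemma sep_iter_succ:
  assumes "p < (i::'i::wellorder)" "\<not> (\<exists>k. p < k \<and> k < i)"
  shows "sep_iter f a b F i = sep_deriv f a b (sep_iter f a b F p)"
  using assms the_immediate_predecessor[OF assms] by (subst sep_iter_unfold) auto

lemma sep_iter_limit:
  assumes "\<exists>j. j < (i::'i::wellorder)" "\<not> (\<exists>j. j < i \<and> \<not> (\<exists>k. j < k \<and> k < i))"
  shows "sep_iter f a b F i = \<Inter> {sep_iter f a b F j | j. j < i}"
  using assms by (subst sep_iter_unfold) auto

lemma sep_deriv_mono: "F \<subseteq> G \<Longrightarrow> sep_deriv f a b F \<subseteq> sep_deriv f a b G"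
  unfolding sep_deriv_def by (intro Int_mono closure_mono) auto

lemma sep_iter_mono: "mono (\<lambda>F. sep_iter f a b F (i::'i::wellorder))"
proof (rule monoI)
  fix F G :: "'a set" assume "F \<subseteq> G"
  then show "sep_iter f a b F i \<subseteq> sep_iter f a b G i"
  proof (induction i rule: less_induct)
    case (less i)
    show ?case
    proof (cases i rule: wellorder_zero_succ_limit_cases)
      case zero
      then show ?thesis using less by (simp add: sep_iter_zero)
    next
      case (succ p)
      then show ?thesis using less by (simp add: sep_iter_succ sep_deriv_mono)
    next
      case limit
      then show ?thesis using less by (simp add: sep_iter_limit) blast
    qed
  qed
qed

lemma compact_insert_Union_shrinking:
  fixes x :: "'a::metric_space"
  assumes compact: "\<And>n. compact (K n)" and shrinking: "\<And>n. K n \<subseteq> ball x (1 / Suc n)"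
  shows "compact (insert x (\<Union>n. K n))"
proof (rule compactI)
  fix C assume open_C: "\<forall>t\<in>C. open t" and cover: "insert x (\<Union>n. K n) \<subseteq> \<Union>C"
  then obtain T where T: "T \<in> C" "x \<in> T" by blast
  then obtain e where "e > 0" "ball x e \<subseteq> T" using open_C open_contains_ball by blast
  obtain N where N: "1 / Suc N < e" using \<open>e > 0\<close> by (metis nat_approx_posE)
  have tail: "K n \<subseteq> T" if "n \<ge> N" for n
  proof -
    have "1 / real (Suc n) \<le> 1 / Suc N" using that by (simp add: frac_le)
    then have "ball x (1 / Suc n) \<subseteq> ball x e" using N by (intro subset_ball) linarith
    then show ?thesis using shrinking[of n] \<open>ball x e \<subseteq> T\<close> by blast
  qed
  have "compact (\<Union>n<N. K n)" using compact by (intro compact_UN) auto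
  moreover have "(\<Union>n<N. K n) \<subseteq> \<Union>C" using cover by blast
  ultimately obtain D where D: "D \<subseteq> C" "finite D" "(\<Union>n<N. K n) \<subseteq> \<Union>D"
    using open_C by (meson compactE)
  have "K n \<subseteq> \<Union>(insert T D)" for n
    using D(3) tail[of n] by (cases "n < N") auto
  then have "insert x (\<Union>n. K n) \<subseteq> \<Union>(insert T D)" using T(2) by blast
  then show "\<exists>C'\<subseteq>C. finite C' \<and> insert x (\<Union>n. K n) \<subseteq> \<Union>C'"
    using D T by (intro exI[of _ "insert T D"]) auto
qed

lemma closure_witnessed_by_compact:
  fixes x :: "'a::metric_space" and T :: "'a set \<Rightarrow> 'a set"
  assumes mono: "mono T"
    and witness: "\<And>y V. y \<in> S \<Longrightarrow> open V \<Longrightarrow> y \<in> V \<Longrightarrow> \<exists>K. compact K \<and> K \<subseteq> V \<and> y \<in> T K"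
    and x: "x \<in> closure (S \<inter> P)" and U: "open U" "x \<in> U"
  shows "\<exists>K. compact K \<and> K \<subseteq> U \<and> x \<in> closure (T K \<inter> P)"
proof -
  have "\<exists>K y. compact K \<and> K \<subseteq> U \<inter> ball x (1 / Suc n) \<and> y \<in> T K \<inter> P \<and> y \<in> ball x (1 / Suc n)"
    for n
  proof -
    have "open (U \<inter> ball x (1 / Suc n))" "x \<in> U \<inter> ball x (1 / Suc n)" using U by auto
    then obtain y where y: "y \<in> S \<inter> P" "y \<in> U \<inter> ball x (1 / Suc n)"
      using x open_Int_closure_eq_empty by blast
    moreover obtain K where "compact K" "K \<subseteq> U \<inter> ball x (1 / Suc n)" "y \<in> T K"
      using witness[of y "U \<inter> ball x (1 / Suc n)"] y \<open>open (U \<inter> ball x (1 / Suc n))\<close> by blast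
    ultimately show ?thesis by blast
  qed
  then obtain K y where K: "\<And>n. compact (K n)" "\<And>n. K n \<subseteq> U \<inter> ball x (1 / Suc n)"
    and y: "\<And>n. y n \<in> T (K n) \<inter> P" "\<And>n. y n \<in> ball x (1 / Suc n)"
    by metis
  define L where "L = insert x (\<Union>n. K n)"
  have "compact L" unfolding L_def using K by (intro compact_insert_Union_shrinking) auto
  moreover have "L \<subseteq> U" unfolding L_def using K(2) U(2) by blast
  moreover have "x \<in> closure (T L \<inter> P)"
    unfolding closure_approachable
  proof (intro allI impI)
    fix d :: real assume "d > 0"
    then obtain n where "1 / Suc n < d" by (metis nat_approx_posE)
    moreover have "y n \<in> T L" using y(1)[of n] monoD[OF mono, of "K n" L] by (auto simp: L_def)
    moreover have "dist (y n) x < 1 / Suc n" using y(2)[of n] by (simp add: dist_commute)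
    ultimately show "\<exists>z\<in>T L \<inter> P. dist z x < d" using y(1)[of n] by force
  qed
  ultimately show ?thesis by blast
qed

lemma countable_Inter_witnessed_by_compact:
  fixes x :: "'a::metric_space" and T :: "'j \<Rightarrow> 'a set \<Rightarrow> 'a set"
  assumes J: "countable J" and mono: "\<And>j. j \<in> J \<Longrightarrow> mono (T j)"
    and witness: "\<And>j V. j \<in> J \<Longrightarrow> open V \<Longrightarrow> x \<in> V \<Longrightarrow> \<exists>K. compact K \<and> K \<subseteq> V \<and> x \<in> T j K"
    and U: "open U" "x \<in> U"
  shows "\<exists>K. compact K \<and> K \<subseteq> U \<and> (\<forall>j\<in>J. x \<in> T j K)"
proof (cases "J = {}")
  case False
  define g where "g = from_nat_into J"
  have g: "g n \<in> J" for n using from_nat_into[OF False] by (simp add: g_def)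
  have "\<exists>K. compact K \<and> K \<subseteq> U \<inter> ball x (1 / Suc n) \<and> x \<in> T (g n) K" for n
    using U by (intro witness g) auto
  then obtain K where K: "\<And>n. compact (K n)" "\<And>n. K n \<subseteq> U \<inter> ball x (1 / Suc n)"
    "\<And>n. x \<in> T (g n) (K n)" by metis
  define L where "L = insert x (\<Union>n. K n)"
  have "compact L" unfolding L_def using K by (intro compact_insert_Union_shrinking) auto
  moreover have "L \<subseteq> U" unfolding L_def using K(2) U(2) by blast
  moreover have "x \<in> T j L" if "j \<in> J" for j
  proof -
    obtain n where "j = g n" using \<open>j \<in> J\<close> range_from_nat_into[OF False J] g_def by blast
    then show ?thesis using K(3)[of n] monoD[OF mono[OF g], of "K n" L] by (auto simp: L_def)
  qed
  ultimately show ?thesis by blast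
qed blast

lemma sep_iter_UNIV_witnessed_by_compact:
  fixes f :: "'a::metric_space \<Rightarrow> real" and i :: "'i::wellorder"
  assumes "countable {j. j < i}" "x \<in> sep_iter f a b UNIV i" "open U" "x \<in> U"
  shows "\<exists>K. compact K \<and> K \<subseteq> U \<and> x \<in> sep_iter f a b K i"
  using assms
proof (induction i arbitrary: x U rule: less_induct)
  case (less i)
  have IH: "\<exists>K. compact K \<and> K \<subseteq> V \<and> y \<in> sep_iter f a b K j"
    if "j < i" "y \<in> sep_iter f a b UNIV j" "open V" "y \<in> V" for j y V
  proof -
    have "{k. k < j} \<subseteq> {k. k < i}" using that(1) by auto
    then have "countable {k. k < j}" using less.prems(1) by (rule countable_subset)
    then show ?thesis using less.IH[OF that(1)] that(2-) by blast
  qed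
  show ?case
  proof (cases i rule: wellorder_zero_succ_limit_cases)
    case zero
    then show ?thesis using less.prems by (intro exI[of _ "{x}"]) (simp add: sep_iter_zero)
  next
    case (succ p)
    let ?T = "\<lambda>K. sep_iter f a b K p"
    have below: "x \<in> closure (?T UNIV \<inter> {y. f y < a})"
      and above: "x \<in> closure (?T UNIV \<inter> {y. f y > b})"
      using less.prems(2) by (simp_all add: sep_iter_succ[OF succ] sep_deriv_def)
    obtain K\<^sub>1 where K\<^sub>1: "compact K\<^sub>1" "K\<^sub>1 \<subseteq> U" "x \<in> closure (?T K\<^sub>1 \<inter> {y. f y < a})"
      using closure_witnessed_by_compact[OF sep_iter_mono IH[OF succ(1)] below less.prems(3,4)] by blast
    obtain K\<^sub>2 where K\<^sub>2: "compact K\<^sub>2" "K\<^sub>2 \<subseteq> U" "x \<in> closure (?T K\<^sub>2 \<inter> {y. f y > b})"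
      using closure_witnessed_by_compact[OF sep_iter_mono IH[OF succ(1)] above less.prems(3,4)] by blast
    have mono\<^sub>1: "?T K\<^sub>1 \<subseteq> ?T (K\<^sub>1 \<union> K\<^sub>2)" and mono\<^sub>2: "?T K\<^sub>2 \<subseteq> ?T (K\<^sub>1 \<union> K\<^sub>2)"
      by (rule monoD[OF sep_iter_mono], blast)+
    have "x \<in> closure (?T (K\<^sub>1 \<union> K\<^sub>2) \<inter> {y. f y < a})"
      by (rule subsetD[OF closure_mono[OF Int_mono[OF mono\<^sub>1 order_refl]] K\<^sub>1(3)])
    moreover have "x \<in> closure (?T (K\<^sub>1 \<union> K\<^sub>2) \<inter> {y. f y > b})"
      by (rule subsetD[OF closure_mono[OF Int_mono[OF mono\<^sub>2 order_refl]] K\<^sub>2(3)])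
    ultimately have "x \<in> sep_iter f a b (K\<^sub>1 \<union> K\<^sub>2) i"
      unfolding sep_iter_succ[OF succ] sep_deriv_def by (rule IntI)
    moreover have "compact (K\<^sub>1 \<union> K\<^sub>2)" using K\<^sub>1(1) K\<^sub>2(1) by (rule compact_Un)
    moreover have "K\<^sub>1 \<union> K\<^sub>2 \<subseteq> U" using K\<^sub>1(2) K\<^sub>2(2) by (rule Un_least)
    ultimately show ?thesis by blast
  next
    case limit
    have below: "x \<in> sep_iter f a b UNIV j" if "j < i" for j
      using less.prems(2) that unfolding sep_iter_limit[OF limit] by blast
    have witness: "\<exists>K. compact K \<and> K \<subseteq> V \<and> x \<in> sep_iter f a b K j"
      if "j \<in> {j. j < i}" "open V" "x \<in> V" for j V
      using that IH below by simp
    obtain K where "compact K" "K \<subseteq> U" "\<forall>j\<in>{j. j < i}. x \<in> sep_iter f a b K j"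
      using countable_Inter_witnessed_by_compact[where T = "\<lambda>j K. sep_iter f a b K j",
          OF less.prems(1) sep_iter_mono witness less.prems(3,4)] by blast
    then show ?thesis unfolding sep_iter_limit[OF limit] by blast
  qed
qed

theorem proposition4p1:
  fixes f :: "'a::polish_space \<Rightarrow> real" and a b :: real and i :: "'i::wellorder"
  assumes "baire1 f" and "a < b" and "countable {j. j < i}"
  shows "sep_iter f a b UNIV i \<noteq> {} \<longleftrightarrow> (\<exists>K. compact K \<and> sep_iter f a b K i \<noteq> {})"
proof
  assume "sep_iter f a b UNIV i \<noteq> {}"
  then obtain x where "x \<in> sep_iter f a b UNIV i" by (auto simp: ex_in_conv[symmetric])
  then obtain K where "compact K" "x \<in> sep_iter f a b K i"
    using sep_iter_UNIV_witnessed_by_compact[OF assms(3) _ open_UNIV UNIV_I] by blast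
  then show "\<exists>K. compact K \<and> sep_iter f a b K i \<noteq> {}" by blast
next
  assume "\<exists>K. compact K \<and> sep_iter f a b K i \<noteq> {}"
  then obtain K where "sep_iter f a b K i \<noteq> {}" by blast
  moreover have "sep_iter f a b K i \<subseteq> sep_iter f a b UNIV i"
    by (rule monoD[OF sep_iter_mono]) simp
  ultimately show "sep_iter f a b UNIV i \<noteq> {}" by blast
qed

end
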